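(* Let $\alpha_1,\alpha_2,\alpha_3,\beta_1,\beta_2,\beta_3,\beta_4,\gamma_1,\gamma_2,\gamma_3,\gamma_4$ be positive real constants, and set $A_1=\alpha_1+\alpha_2+\alpha_3$, $A_2=\beta_1-\beta_4$, $A_3=\gamma_1-\gamma_4$. Consider the system, on the simplex $\{(x_0,x_1,x_2): x_i\ge 0,\ x_0+x_1+x_2=1\}$, $$\frac{dx_0}{dt}=\alpha_1x_0+\beta_2x_1+\gamma_2x_2-x_0(A_1x_0+A_2x_1+A_3x_2),$$ $$\frac{dx_1}{dt}=\alpha_2x_0+(\beta_1-\beta_2-\beta_3-\beta_4)x_1+\gamma_3x_2-x_1(A_1x_0+A_2x_1+A_3x_2),$$ $$\frac{dx_2}{dt}=\alpha_3x_0+\beta_3x_1+(\gamma_1-\gamma_2-\gamma_3-\gamma_4)x_2-x_2(A_1x_0+A_2x_1+A_3x_2).$$ Then this system has a unique fixed point with all coordinates positive, and this fixed point is stable.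
   Context: This is the "reversible model" for the proportions $x_0,x_1,x_2$ of three cancer cell phenotypes CSC$_0$, NSCC$_1$, NSCC$_2$, obtained by normalizing the linear system $dX/dt=QX$ for cell numbers $X=(X_0,X_1,X_2)$, $x_i=X_i/(X_0+X_1+X_2)$, where $$Q=\begin{pmatrix}\alpha_1&\beta_2&\gamma_2\\ \alpha_2&\beta_1-\beta_2-\beta_3-\beta_4&\gamma_3\\ \alpha_3&\beta_3&\gamma_1-\gamma_2-\gamma_3-\gamma_4\end{pmatrix}.$$ Parameters: $\alpha_1$ CSC symmetric division, $\alpha_2,\alpha_3$ asymmetric CSC division into NSCC$_1$, NSCC$_2$; $\beta_1,\gamma_1$ NSCC divisions; $\beta_2,\gamma_2$ de-differentiation to CSC; $\beta_3,\gamma_3$ interconversion between NSCC$_1$ and NSCC$_2$; $\beta_4,\gamma_4$ death rates. *)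

theory Defs
  imports "HOL-Analysis.Analysis"
begin

definition rev_rhs ::
  "real \<Rightarrow> real \<Rightarrow> real \<Rightarrow> real \<Rightarrow> real \<Rightarrow> real \<Rightarrow> real \<Rightarrow> real \<Rightarrow> real \<Rightarrow> real \<Rightarrow> real
   \<Rightarrow> real \<times> real \<times> real \<Rightarrow> real \<times> real \<times> real" where
  "rev_rhs a1 a2 a3 b1 b2 b3 b4 g1 g2 g3 g4 = (\<lambda>(x0, x1, x2).
     (let A1 = a1 + a2 + a3; A2 = b1 - b4; A3 = g1 - g4;
          S = A1 * x0 + A2 * x1 + A3 * x2
      in (a1 * x0 + b2 * x1 + g2 * x2 - x0 * S,
          a2 * x0 + (b1 - b2 - b3 - b4) * x1 + g3 * x2 - x1 * S,
          a3 * x0 + b3 * x1 + (g1 - g2 - g3 - g4) * x2 - x2 * S)))"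

definition simplex3 :: "(real \<times> real \<times> real) set" where
  "simplex3 = {(x0, x1, x2). x0 \<ge> 0 \<and> x1 \<ge> 0 \<and> x2 \<ge> 0 \<and> x0 + x1 + x2 = 1}"

definition is_solution :: "('a::real_normed_vector \<Rightarrow> 'a) \<Rightarrow> (real \<Rightarrow> 'a) \<Rightarrow> bool" where
  "is_solution F x \<longleftrightarrow> (\<forall>t\<ge>0. (x has_vector_derivative F (x t)) (at t within {0..}))"

definition lyapunov_stable :: "('a::real_normed_vector \<Rightarrow> 'a) \<Rightarrow> 'a set \<Rightarrow> 'a \<Rightarrow> bool" where
  "lyapunov_stable F S p \<longleftrightarrow>
     (\<forall>\<epsilon>>0. \<exists>\<delta>>0. \<forall>x. is_solution F x \<and> x 0 \<in> S \<and> dist (x 0) p < \<delta>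
        \<longrightarrow> (\<forall>t\<ge>0. dist (x t) p < \<epsilon>))"

end

theory Submission
  imports Defs
begin

text \<open>The proportions follow the linear flow \<open>X' = Q X\<close> projected onto the plane
  \<open>x\<^sub>0 + x\<^sub>1 + x\<^sub>2 = 1\<close>, and \<open>Q\<close> has positive off-diagonal entries. Brouwer's theorem gives
  positive right and left eigenvectors \<open>z\<close>, \<open>w\<close> of \<open>Q\<close> for a common eigenvalue \<open>l\<close>, normalised
  by \<open>w \<bullet> z = 1\<close>. Writing \<open>x\<^sub>i = z\<^sub>i (u\<^sub>i + m)\<close> with \<open>m = w \<bullet> x\<close>, everything rests on the
  identity \<open>2 (l \<Sigma> w\<^sub>i z\<^sub>i u\<^sub>i\<^sup>2 - \<Sigma> w\<^sub>i u\<^sub>i q\<^sub>i\<^sub>j z\<^sub>j u\<^sub>j) = \<Sigma>\<^sub>i\<^sub>\<noteq>\<^sub>j w\<^sub>i q\<^sub>i\<^sub>j z\<^sub>j (u\<^sub>i - u\<^sub>j)\<^sup>2 \<ge> 0\<close>.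
  At a positive equilibrium the left side vanishes, so \<open>u\<close> is constant, hence zero, and the
  equilibrium is \<open>z / (z\<^sub>0 + z\<^sub>1 + z\<^sub>2)\<close>. Along solutions the same inequality makes
  \<open>W / m\<^sup>2\<close>, with \<open>W = \<Sigma> w\<^sub>i z\<^sub>i u\<^sub>i\<^sup>2\<close>, nonincreasing (a Gronwall argument), and on the plane
  \<open>W / m\<^sup>2\<close> controls the distance to the equilibrium, which gives Lyapunov stability.\<close>

lemma compact_simplex3: "compact simplex3"
proof -
  have "simplex3 = {x. fst x \<ge> 0} \<inter> {x. fst (snd x) \<ge> 0} \<inter> {x. snd (snd x) \<ge> 0}
     \<inter> {x. fst x + fst (snd x) + snd (snd x) = (1::real)}"
    by (auto simp: simplex3_def)
  moreover have "closed \<dots>"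
    by (intro closed_Int closed_Collect_le closed_Collect_eq continuous_intros)
  moreover have "bounded simplex3"
    unfolding bounded_iff
  proof (intro exI ballI)
    fix x assume "x \<in> simplex3"
    then obtain a b c where x: "x = (a, b, c)" "a \<ge> 0" "b \<ge> 0" "c \<ge> 0" "a + b + c = 1"
      by (auto simp: simplex3_def)
    have "norm x \<le> norm a + (norm b + norm c)"
      using x norm_Pair_le[of a "(b, c)"] norm_Pair_le[of b c] by simp
    with x show "norm x \<le> 1" by simp
  qed
  ultimately show ?thesis by (simp add: compact_eq_bounded_closed)
qed

lemma convex_simplex3: "convex simplex3"
  unfolding convex_def
proof (intro ballI allI impI)
  fix x y :: "real \<times> real \<times> real" and u v :: real
  assume "x \<in> simplex3" "y \<in> simplex3" and uv: "0 \<le> u" "0 \<le> v" "u + v = 1"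
  then obtain a b c a' b' c' where xy: "x = (a, b, c)" "y = (a', b', c')"
    and h: "0 \<le> a" "0 \<le> b" "0 \<le> c" "a + b + c = 1" "0 \<le> a'" "0 \<le> b'" "0 \<le> c'" "a' + b' + c' = 1"
    by (auto simp: simplex3_def)
  have "u * a + v * a' + (u * b + v * b') + (u * c + v * c') = u * (a + b + c) + v * (a' + b' + c')"
    by (simp add: algebra_simps)
  with h uv show "u *\<^sub>R x + v *\<^sub>R y \<in> simplex3"
    by (simp add: xy simplex3_def)
qed

lemma dist_triple_le:
  fixes a b c a' b' c' :: real
  shows "dist (a, b, c) (a', b', c') \<le> \<bar>a - a'\<bar> + \<bar>b - b'\<bar> + \<bar>c - c'\<bar>"
proof -
  have "dist (a, b, c) (a', b', c') \<le> \<bar>dist a a'\<bar> + \<bar>dist (b, c) (b', c')\<bar>"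
    unfolding dist_Pair_Pair[of a "(b, c)"] by (rule sqrt_sum_squares_le_sum_abs)
  moreover have "dist (b, c) (b', c') \<le> \<bar>dist b b'\<bar> + \<bar>dist c c'\<bar>"
    unfolding dist_Pair_Pair by (rule sqrt_sum_squares_le_sum_abs)
  ultimately show ?thesis by (simp add: dist_real_def)
qed

text \<open>Brouwer's theorem for the normalised map \<open>x \<mapsto> M x / ((M x)\<^sub>0 + (M x)\<^sub>1 + (M x)\<^sub>2)\<close>,
  which sends the simplex into itself.\<close>

lemma positive_matrix3_eigenvector:
  fixes a b c d e f g h k :: real
  assumes pos: "a > 0" "b > 0" "c > 0" "d > 0" "e > 0" "f > 0" "g > 0" "h > 0" "k > 0"
  shows "\<exists>z0 z1 z2 \<sigma>. z0 > 0 \<and> z1 > 0 \<and> z2 > 0 \<and> a * z0 + b * z1 + c * z2 = \<sigma> * z0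
          \<and> d * z0 + e * z1 + f * z2 = \<sigma> * z1 \<and> g * z0 + h * z1 + k * z2 = \<sigma> * z2"
proof -
  define r where "r = min (min (min a b) (min c d)) (min (min e f) (min (min g h) k))"
  have r: "r > 0" "r \<le> a" "r \<le> b" "r \<le> c" "r \<le> d" "r \<le> e" "r \<le> f" "r \<le> g" "r \<le> h" "r \<le> k"
    using pos by (auto simp: r_def min_le_iff_disj)
  define Y0 where "Y0 x = a * fst x + b * fst (snd x) + c * snd (snd x)" for x :: "real \<times> real \<times> real"
  define Y1 where "Y1 x = d * fst x + e * fst (snd x) + f * snd (snd x)" for x :: "real \<times> real \<times> real"
  define Y2 where "Y2 x = g * fst x + h * fst (snd x) + k * snd (snd x)" for x :: "real \<times> real \<times> real"
  define \<Phi> where "\<Phi> x = (Y0 x / (Y0 x + Y1 x + Y2 x), Y1 x / (Y0 x + Y1 x + Y2 x),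
         Y2 x / (Y0 x + Y1 x + Y2 x))" for x
  have Y_ge: "Y0 x \<ge> r \<and> Y1 x \<ge> r \<and> Y2 x \<ge> r" if x_simplex: "x \<in> simplex3" for x
  proof -
    obtain x0 x1 x2 where x: "x = (x0, x1, x2)" "x0 \<ge> 0" "x1 \<ge> 0" "x2 \<ge> 0" "x0 + x1 + x2 = 1"
      using x_simplex by (cases x) (auto simp: simplex3_def)
    have "r = r * x0 + r * x1 + r * x2" using x(5) by (metis distrib_left mult.right_neutral)
    moreover have "Y0 x \<ge> r * x0 + r * x1 + r * x2" "Y1 x \<ge> r * x0 + r * x1 + r * x2"
      "Y2 x \<ge> r * x0 + r * x1 + r * x2"
      unfolding Y0_def Y1_def Y2_def x(1) fst_conv snd_conv
      by (intro add_mono mult_right_mono; use x r in simp)+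
    ultimately show ?thesis by simp
  qed
  have "continuous_on simplex3 \<Phi>"
    unfolding \<Phi>_def Y0_def Y1_def Y2_def
    by (intro continuous_intros) (use Y_ge r in \<open>fastforce simp: Y0_def Y1_def Y2_def\<close>)+
  moreover have "\<Phi> \<in> simplex3 \<rightarrow> simplex3"
  proof
    fix x assume "x \<in> simplex3"
    with Y_ge[OF this] r have "Y0 x + Y1 x + Y2 x > 0" "Y0 x \<ge> 0" "Y1 x \<ge> 0" "Y2 x \<ge> 0" by auto
    then show "\<Phi> x \<in> simplex3" unfolding \<Phi>_def simplex3_def
      by (auto simp: add_divide_distrib[symmetric])
  qed
  moreover have "(1, 0, 0) \<in> simplex3" by (simp add: simplex3_def)
  then have "simplex3 \<noteq> {}" by blast
  ultimately obtain x where x: "x \<in> simplex3" "\<Phi> x = x"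
    using brouwer[OF compact_simplex3 convex_simplex3] by blast
  define \<sigma> where "\<sigma> = Y0 x + Y1 x + Y2 x"
  have \<sigma>: "\<sigma> > 0" using Y_ge[OF x(1)] r by (auto simp: \<sigma>_def)
  obtain x0 x1 x2 where xx: "x = (x0, x1, x2)" by (cases x)
  have "Y0 x / \<sigma> = x0" "Y1 x / \<sigma> = x1" "Y2 x / \<sigma> = x2"
    using x(2) unfolding \<Phi>_def \<sigma>_def xx by (simp_all add: prod_eq_iff)
  then have Y: "Y0 x = \<sigma> * x0" "Y1 x = \<sigma> * x1" "Y2 x = \<sigma> * x2"
    using \<sigma> by (auto simp: field_simps)
  then have "\<sigma> * x0 > 0" "\<sigma> * x1 > 0" "\<sigma> * x2 > 0"
    using Y_ge[OF x(1)] r(1) by auto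
  then have "x0 > 0" "x1 > 0" "x2 > 0"
    using \<sigma> by (simp_all add: zero_less_mult_iff)
  with Y show ?thesis
    by (intro exI[of _ x0] exI[of _ x1] exI[of _ x2] exI[of _ \<sigma>]) (auto simp: Y0_def Y1_def Y2_def xx)
qed

lemma metzler3_positive_eigenvector:
  fixes a b c d e f g h k :: real
  assumes pos: "b > 0" "c > 0" "d > 0" "f > 0" "g > 0" "h > 0"
  shows "\<exists>z0 z1 z2 l. z0 > 0 \<and> z1 > 0 \<and> z2 > 0 \<and> a * z0 + b * z1 + c * z2 = l * z0
          \<and> d * z0 + e * z1 + f * z2 = l * z1 \<and> g * z0 + h * z1 + k * z2 = l * z2"
proof -
  define C where "C = \<bar>a\<bar> + \<bar>e\<bar> + \<bar>k\<bar> + 1"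
  have "a + C > 0" "e + C > 0" "k + C > 0"
    unfolding C_def by arith+
  then obtain z0 z1 z2 \<sigma> where "z0 > 0" "z1 > 0" "z2 > 0"
    "(a + C) * z0 + b * z1 + c * z2 = \<sigma> * z0" "d * z0 + (e + C) * z1 + f * z2 = \<sigma> * z1"
    "g * z0 + h * z1 + (k + C) * z2 = \<sigma> * z2"
    using positive_matrix3_eigenvector[of "a + C" b c d "e + C" f g h "k + C"] pos by blast
  then show ?thesis
    by (intro exI[of _ z0] exI[of _ z1] exI[of _ z2] exI[of _ "\<sigma> - C"]) (simp add: algebra_simps)
qed

lemma nonpos_preserved_by_linear_differential_inequality:
  fixes f f' g :: "real \<Rightarrow> real"
  assumes T: "0 \<le> T" and g: "continuous_on {0..T} g"
    and f: "\<And>s. s \<in> {0..T} \<Longrightarrow> (f has_real_derivative f' s) (at s within {0..T})"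
    and f'_le: "\<And>s. s \<in> {0..T} \<Longrightarrow> f' s \<le> g s * f s"
    and f0: "f 0 \<le> 0"
  shows "f T \<le> 0"
proof -
  define G where "G s = integral {0..s} g" for s
  define H where "H s = f s * exp (- G s)" for s
  have G: "(G has_real_derivative g s) (at s within {0..T})" if "s \<in> {0..T}" for s
    unfolding G_def by (rule integral_has_real_derivative[OF g that])
  have H: "(H has_real_derivative (f' s - g s * f s) * exp (- G s)) (at s within {0..T})"
    if s: "s \<in> {0..T}" for s
    unfolding H_def by (rule derivative_eq_intros f G s refl | simp add: algebra_simps)+
  have "H T \<le> H 0"
  proof (rule DERIV_nonpos_imp_decreasing_open[OF T])
    fix s :: real assume s: "0 < s" "s < T"
    then have "(H has_real_derivative (f' s - g s * f s) * exp (- G s)) (at s)"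
      using H[of s] at_within_Icc_at[of 0 s T] by auto
    moreover have "(f' s - g s * f s) * exp (- G s) \<le> 0"
      using f'_le[of s] s by (simp add: mult_nonpos_nonneg)
    ultimately show "\<exists>y. (H has_real_derivative y) (at s) \<and> y \<le> 0" by blast
  qed (use H in \<open>rule DERIV_continuous_on\<close>)
  then have "f T * exp (- G T) \<le> 0" using f0 by (simp add: H_def G_def)
  then show ?thesis by (simp add: mult_le_0_iff)
qed

locale metzler3 =
  fixes q00 q01 q02 q10 q11 q12 q20 q21 q22 :: real
  assumes offdiag_pos: "q01 > 0" "q02 > 0" "q10 > 0" "q12 > 0" "q20 > 0" "q21 > 0"
begin

definition growth :: "real \<Rightarrow> real \<Rightarrow> real \<Rightarrow> real" where
  "growth x0 x1 x2 = (q00 + q10 + q20) * x0 + (q01 + q11 + q21) * x1 + (q02 + q12 + q22) * x2"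

definition F0 :: "real \<Rightarrow> real \<Rightarrow> real \<Rightarrow> real" where
  "F0 x0 x1 x2 = q00 * x0 + q01 * x1 + q02 * x2 - x0 * growth x0 x1 x2"

definition F1 :: "real \<Rightarrow> real \<Rightarrow> real \<Rightarrow> real" where
  "F1 x0 x1 x2 = q10 * x0 + q11 * x1 + q12 * x2 - x1 * growth x0 x1 x2"

definition F2 :: "real \<Rightarrow> real \<Rightarrow> real \<Rightarrow> real" where
  "F2 x0 x1 x2 = q20 * x0 + q21 * x1 + q22 * x2 - x2 * growth x0 x1 x2"

definition F :: "real \<times> real \<times> real \<Rightarrow> real \<times> real \<times> real" where
  "F = (\<lambda>(x0, x1, x2). (F0 x0 x1 x2, F1 x0 x1 x2, F2 x0 x1 x2))"

lemma F0_F1_F2_sum: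
  "F0 x0 x1 x2 + F1 x0 x1 x2 + F2 x0 x1 x2 = growth x0 x1 x2 * (1 - (x0 + x1 + x2))"
  unfolding F0_def F1_def F2_def growth_def by (simp add: algebra_simps)

definition solves_on :: "real \<Rightarrow> (real \<Rightarrow> real) \<Rightarrow> (real \<Rightarrow> real) \<Rightarrow> (real \<Rightarrow> real) \<Rightarrow> bool" where
  "solves_on T X0 X1 X2 \<longleftrightarrow> (\<forall>s\<in>{0..T}.
     (X0 has_real_derivative F0 (X0 s) (X1 s) (X2 s)) (at s within {0..T}) \<and>
     (X1 has_real_derivative F1 (X0 s) (X1 s) (X2 s)) (at s within {0..T}) \<and>
     (X2 has_real_derivative F2 (X0 s) (X1 s) (X2 s)) (at s within {0..T}))"

lemma solves_onD:
  assumes "solves_on T X0 X1 X2" and "s \<in> {0..T}"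
  shows "(X0 has_real_derivative F0 (X0 s) (X1 s) (X2 s)) (at s within {0..T})"
    and "(X1 has_real_derivative F1 (X0 s) (X1 s) (X2 s)) (at s within {0..T})"
    and "(X2 has_real_derivative F2 (X0 s) (X1 s) (X2 s)) (at s within {0..T})"
  using assms unfolding solves_on_def by blast+

lemma solves_on_if_is_solution:
  assumes "is_solution F x"
  shows "solves_on T (\<lambda>t. fst (x t)) (\<lambda>t. fst (snd (x t))) (\<lambda>t. snd (snd (x t)))"
  unfolding solves_on_def
proof
  fix s assume "s \<in> {0..T}"
  then have dx: "(x has_vector_derivative F (x s)) (at s within {0..T})"
    using assms unfolding is_solution_def by (auto intro: has_vector_derivative_within_subset)
  have "((\<lambda>t. fst (x t)) has_vector_derivative fst (F (x s))) (at s within {0..T})"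
    "((\<lambda>t. fst (snd (x t))) has_vector_derivative fst (snd (F (x s)))) (at s within {0..T})"
    "((\<lambda>t. snd (snd (x t))) has_vector_derivative snd (snd (F (x s)))) (at s within {0..T})"
    using bounded_linear.has_vector_derivative[OF bounded_linear_fst dx]
      bounded_linear.has_vector_derivative[OF bounded_linear_fst
        bounded_linear.has_vector_derivative[OF bounded_linear_snd dx]]
      bounded_linear.has_vector_derivative[OF bounded_linear_snd
        bounded_linear.has_vector_derivative[OF bounded_linear_snd dx]]
    by simp_all
  then show "((\<lambda>t. fst (x t)) has_real_derivative F0 (fst (x s)) (fst (snd (x s))) (snd (snd (x s))))
      (at s within {0..T}) \<and>
    ((\<lambda>t. fst (snd (x t))) has_real_derivative F1 (fst (x s)) (fst (snd (x s))) (snd (snd (x s))))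
      (at s within {0..T}) \<and>
    ((\<lambda>t. snd (snd (x t))) has_real_derivative F2 (fst (x s)) (fst (snd (x s))) (snd (snd (x s))))
      (at s within {0..T})"
    by (simp add: has_real_derivative_iff_has_vector_derivative F_def split_beta)
qed

lemma continuous_on_growth_solves_on:
  assumes "solves_on T X0 X1 X2"
  shows "continuous_on {0..T} (\<lambda>s. growth (X0 s) (X1 s) (X2 s))"
proof -
  have "continuous_on {0..T} X0" "continuous_on {0..T} X1" "continuous_on {0..T} X2"
    by (rule DERIV_continuous_on, erule solves_onD[OF assms])+
  then show ?thesis unfolding growth_def by (intro continuous_intros)
qed

lemma solves_on_sum_eq_1:
  assumes sol: "solves_on T X0 X1 X2" and T: "0 \<le> T" and init: "X0 0 + X1 0 + X2 0 = 1"
  shows "X0 T + X1 T + X2 T = 1"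
proof -
  define S where "S s = growth (X0 s) (X1 s) (X2 s)" for s
  define e where "e s = 1 - (X0 s + X1 s + X2 s)" for s
  have S: "continuous_on {0..T} (\<lambda>s. - S s)"
    using continuous_on_growth_solves_on[OF sol] unfolding S_def by (intro continuous_intros)
  have e: "(e has_real_derivative - S s * e s) (at s within {0..T})" if s: "s \<in> {0..T}" for s
  proof -
    have "(e has_real_derivative 0 - (F0 (X0 s) (X1 s) (X2 s) + F1 (X0 s) (X1 s) (X2 s)
        + F2 (X0 s) (X1 s) (X2 s))) (at s within {0..T})"
      unfolding e_def by (intro DERIV_diff DERIV_const DERIV_add solves_onD[OF sol s])
    then show ?thesis unfolding F0_F1_F2_sum S_def e_def by simp
  qed
  have minus_e: "((\<lambda>s. - e s) has_real_derivative - S s * - e s) (at s within {0..T})"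
    if "s \<in> {0..T}" for s
    using DERIV_minus[OF e[OF that]] by simp
  have "e T \<le> 0"
    by (rule nonpos_preserved_by_linear_differential_inequality[OF T S e]) (simp_all add: e_def init)
  moreover have "- e T \<le> 0"
    by (rule nonpos_preserved_by_linear_differential_inequality[OF T S minus_e])
      (simp_all add: e_def init)
  ultimately show ?thesis by (simp add: e_def)
qed

end

locale metzler3_perron = metzler3 +
  fixes z0 z1 z2 w0 w1 w2 l :: real
  assumes z_pos: "z0 > 0" "z1 > 0" "z2 > 0"
    and w_pos: "w0 > 0" "w1 > 0" "w2 > 0"
    and right_eigen: "q00 * z0 + q01 * z1 + q02 * z2 = l * z0" "q10 * z0 + q11 * z1 + q12 * z2 = l * z1"
      "q20 * z0 + q21 * z1 + q22 * z2 = l * z2"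
    and left_eigen: "w0 * q00 + w1 * q10 + w2 * q20 = l * w0" "w0 * q01 + w1 * q11 + w2 * q21 = l * w1"
      "w0 * q02 + w1 * q12 + w2 * q22 = l * w2"
    and normalized: "w0 * z0 + w1 * z1 + w2 * z2 = 1"
begin

definition wnorm :: "real \<Rightarrow> real \<Rightarrow> real \<Rightarrow> real" where
  "wnorm u0 u1 u2 = w0 * z0 * u0\<^sup>2 + w1 * z1 * u1\<^sup>2 + w2 * z2 * u2\<^sup>2"

definition qform :: "real \<Rightarrow> real \<Rightarrow> real \<Rightarrow> real" where
  "qform u0 u1 u2 = w0 * u0 * (q00 * z0 * u0 + q01 * z1 * u1 + q02 * z2 * u2)
     + w1 * u1 * (q10 * z0 * u0 + q11 * z1 * u1 + q12 * z2 * u2)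
     + w2 * u2 * (q20 * z0 * u0 + q21 * z1 * u1 + q22 * z2 * u2)"

definition dirichlet :: "real \<Rightarrow> real \<Rightarrow> real \<Rightarrow> real" where
  "dirichlet u0 u1 u2 = w0 * q01 * z1 * (u0 - u1)\<^sup>2 + w0 * q02 * z2 * (u0 - u2)\<^sup>2
     + w1 * q10 * z0 * (u1 - u0)\<^sup>2 + w1 * q12 * z2 * (u1 - u2)\<^sup>2
     + w2 * q20 * z0 * (u2 - u0)\<^sup>2 + w2 * q21 * z1 * (u2 - u1)\<^sup>2"

lemma dirichlet_eq: "dirichlet u0 u1 u2 = 2 * (l * wnorm u0 u1 u2 - qform u0 u1 u2)"
  unfolding dirichlet_def wnorm_def qform_def using right_eigen left_eigen by algebra

lemma dirichlet_nonneg: "dirichlet u0 u1 u2 \<ge> 0"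
  unfolding dirichlet_def using offdiag_pos z_pos w_pos
  by (intro add_nonneg_nonneg mult_nonneg_nonneg) auto

lemma dirichlet_eq_0_imp_constant:
  assumes "dirichlet u0 u1 u2 = 0"
  shows "u1 = u0" and "u2 = u0"
proof -
  have "0 \<le> w0 * q01 * z1 * (u0 - u1)\<^sup>2" "0 \<le> w0 * q02 * z2 * (u0 - u2)\<^sup>2"
    "0 \<le> w1 * q10 * z0 * (u1 - u0)\<^sup>2" "0 \<le> w1 * q12 * z2 * (u1 - u2)\<^sup>2"
    "0 \<le> w2 * q20 * z0 * (u2 - u0)\<^sup>2" "0 \<le> w2 * q21 * z1 * (u2 - u1)\<^sup>2"
    using offdiag_pos z_pos w_pos by auto
  with assms have "w0 * q01 * z1 * (u0 - u1)\<^sup>2 = 0" "w0 * q02 * z2 * (u0 - u2)\<^sup>2 = 0"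
    unfolding dirichlet_def by linarith+
  then show "u1 = u0" "u2 = u0" using offdiag_pos z_pos w_pos by auto
qed

lemma qform_le: "qform u0 u1 u2 \<le> l * wnorm u0 u1 u2"
  using dirichlet_nonneg[of u0 u1 u2] unfolding dirichlet_eq by simp

definition wmass :: "real \<Rightarrow> real \<Rightarrow> real \<Rightarrow> real" where
  "wmass x0 x1 x2 = w0 * x0 + w1 * x1 + w2 * x2"

definition deviation :: "real \<Rightarrow> real \<Rightarrow> real \<Rightarrow> real" where
  "deviation x0 x1 x2 = w0 / z0 * (x0 - z0 * wmass x0 x1 x2)\<^sup>2 + w1 / z1 * (x1 - z1 * wmass x0 x1 x2)\<^sup>2
     + w2 / z2 * (x2 - z2 * wmass x0 x1 x2)\<^sup>2"

definition lyapunov :: "real \<times> real \<times> real \<Rightarrow> real" where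
  "lyapunov x = deviation (fst x) (fst (snd x)) (snd (snd x)) / (wmass (fst x) (fst (snd x)) (snd (snd x)))\<^sup>2"

definition deviation_rate :: "real \<Rightarrow> real \<Rightarrow> real \<Rightarrow> real" where
  "deviation_rate x0 x1 x2 =
     (let m = wmass x0 x1 x2; dm = wmass (F0 x0 x1 x2) (F1 x0 x1 x2) (F2 x0 x1 x2)
      in 2 * (w0 / z0 * (x0 - z0 * m) * (F0 x0 x1 x2 - z0 * dm)
        + w1 / z1 * (x1 - z1 * m) * (F1 x0 x1 x2 - z1 * dm)
        + w2 / z2 * (x2 - z2 * m) * (F2 x0 x1 x2 - z2 * dm)))"

lemma deviation_nonneg: "deviation x0 x1 x2 \<ge> 0"
  unfolding deviation_def using z_pos w_pos by (intro add_nonneg_nonneg mult_nonneg_nonneg) auto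

lemma wmass_F:
  "wmass (F0 x0 x1 x2) (F1 x0 x1 x2) (F2 x0 x1 x2) = (l - growth x0 x1 x2) * wmass x0 x1 x2"
  unfolding wmass_def F0_def F1_def F2_def growth_def using left_eigen by algebra

lemma deviation_coordinates:
  obtains u0 u1 u2 where "x0 = z0 * (u0 + wmass x0 x1 x2)" "x1 = z1 * (u1 + wmass x0 x1 x2)"
    "x2 = z2 * (u2 + wmass x0 x1 x2)"
proof
  show "x0 = z0 * ((x0 - z0 * wmass x0 x1 x2) / z0 + wmass x0 x1 x2)"
    "x1 = z1 * ((x1 - z1 * wmass x0 x1 x2) / z1 + wmass x0 x1 x2)"
    "x2 = z2 * ((x2 - z2 * wmass x0 x1 x2) / z2 + wmass x0 x1 x2)"
    using z_pos by (simp_all add: field_simps)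
qed

lemma F_in_deviation_coordinates:
  assumes "x0 = z0 * (u0 + m)" "x1 = z1 * (u1 + m)" "x2 = z2 * (u2 + m)"
  shows "F0 x0 x1 x2 = q00 * z0 * u0 + q01 * z1 * u1 + q02 * z2 * u2 - growth x0 x1 x2 * z0 * u0
      + (l - growth x0 x1 x2) * z0 * m"
    and "F1 x0 x1 x2 = q10 * z0 * u0 + q11 * z1 * u1 + q12 * z2 * u2 - growth x0 x1 x2 * z1 * u1
      + (l - growth x0 x1 x2) * z1 * m"
    and "F2 x0 x1 x2 = q20 * z0 * u0 + q21 * z1 * u1 + q22 * z2 * u2 - growth x0 x1 x2 * z2 * u2
      + (l - growth x0 x1 x2) * z2 * m"
  unfolding F0_def F1_def F2_def using assms right_eigen by algebra+

lemma deviation_in_deviation_coordinates: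
  assumes "x0 = z0 * (u0 + wmass x0 x1 x2)" "x1 = z1 * (u1 + wmass x0 x1 x2)"
    "x2 = z2 * (u2 + wmass x0 x1 x2)"
  shows "deviation x0 x1 x2 = wnorm u0 u1 u2"
    and "w0 * z0 * u0 + w1 * z1 * u1 + w2 * z2 * u2 = 0"
proof -
  have "x0 - z0 * wmass x0 x1 x2 = z0 * u0" "x1 - z1 * wmass x0 x1 x2 = z1 * u1"
    "x2 - z2 * wmass x0 x1 x2 = z2 * u2"
    using assms by (simp_all add: algebra_simps)
  then show "deviation x0 x1 x2 = wnorm u0 u1 u2"
    unfolding deviation_def wnorm_def using z_pos by (simp add: power2_eq_square)
  have "wmass x0 x1 x2 = w0 * x0 + w1 * x1 + w2 * x2" by (simp add: wmass_def)
  then show "w0 * z0 * u0 + w1 * z1 * u1 + w2 * z2 * u2 = 0"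
    using assms normalized by algebra
qed

lemma deviation_rate_le: "deviation_rate x0 x1 x2 \<le> 2 * (l - growth x0 x1 x2) * deviation x0 x1 x2"
proof -
  define m where "m = wmass x0 x1 x2"
  define S where "S = growth x0 x1 x2"
  obtain u0 u1 u2 where u: "x0 = z0 * (u0 + m)" "x1 = z1 * (u1 + m)" "x2 = z2 * (u2 + m)"
    using deviation_coordinates unfolding m_def by blast
  have weights: "w0 / z0 * (x0 - z0 * m) = w0 * u0" "w1 / z1 * (x1 - z1 * m) = w1 * u1"
    "w2 / z2 * (x2 - z2 * m) = w2 * u2"
    using u z_pos by (simp_all add: field_simps)
  have "deviation_rate x0 x1 x2 = 2 * (w0 * u0 * (F0 x0 x1 x2 - z0 * ((l - S) * m))
      + w1 * u1 * (F1 x0 x1 x2 - z1 * ((l - S) * m)) + w2 * u2 * (F2 x0 x1 x2 - z2 * ((l - S) * m)))"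
    unfolding deviation_rate_def Let_def wmass_F m_def[symmetric] S_def[symmetric] weights ..
  also have "\<dots> = 2 * (qform u0 u1 u2 - S * wnorm u0 u1 u2)"
  proof -
    have F: "F0 x0 x1 x2 - z0 * ((l - S) * m) = q00 * z0 * u0 + q01 * z1 * u1 + q02 * z2 * u2 - S * z0 * u0"
      "F1 x0 x1 x2 - z1 * ((l - S) * m) = q10 * z0 * u0 + q11 * z1 * u1 + q12 * z2 * u2 - S * z1 * u1"
      "F2 x0 x1 x2 - z2 * ((l - S) * m) = q20 * z0 * u0 + q21 * z1 * u1 + q22 * z2 * u2 - S * z2 * u2"
      using F_in_deviation_coordinates[OF u] by (simp_all add: S_def)
    show ?thesis unfolding F qform_def wnorm_def by (simp add: algebra_simps power2_eq_square)
  qed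
  also have "\<dots> \<le> 2 * (l - S) * wnorm u0 u1 u2"
    using qform_le[of u0 u1 u2] by (simp add: algebra_simps)
  also have "wnorm u0 u1 u2 = deviation x0 x1 x2"
    using deviation_in_deviation_coordinates(1)[OF u[unfolded m_def]] by simp
  finally show ?thesis by (simp add: S_def)
qed

lemma solves_on_has_derivative_wmass:
  assumes "solves_on T X0 X1 X2" and "s \<in> {0..T}"
  shows "((\<lambda>s. wmass (X0 s) (X1 s) (X2 s)) has_real_derivative
      (l - growth (X0 s) (X1 s) (X2 s)) * wmass (X0 s) (X1 s) (X2 s)) (at s within {0..T})"
proof -
  have "((\<lambda>s. wmass (X0 s) (X1 s) (X2 s)) has_real_derivative
      wmass (F0 (X0 s) (X1 s) (X2 s)) (F1 (X0 s) (X1 s) (X2 s)) (F2 (X0 s) (X1 s) (X2 s)))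
      (at s within {0..T})"
    unfolding wmass_def by (intro DERIV_add DERIV_cmult solves_onD[OF assms])
  then show ?thesis unfolding wmass_F .
qed

lemma solves_on_has_derivative_deviation:
  assumes "solves_on T X0 X1 X2" and "s \<in> {0..T}"
  shows "((\<lambda>s. deviation (X0 s) (X1 s) (X2 s)) has_real_derivative deviation_rate (X0 s) (X1 s) (X2 s))
      (at s within {0..T})"
  unfolding deviation_def wmass_def
  by (rule derivative_eq_intros solves_onD[OF assms] refl)+
    (use z_pos in \<open>simp add: deviation_rate_def Let_def wmass_def field_simps\<close>)

lemma solves_on_deviation_le:
  assumes sol: "solves_on T X0 X1 X2" and T: "0 \<le> T" and m0: "wmass (X0 0) (X1 0) (X2 0) \<noteq> 0"
  shows "deviation (X0 T) (X1 T) (X2 T) \<le> lyapunov (X0 0, X1 0, X2 0) * (wmass (X0 T) (X1 T) (X2 T))\<^sup>2"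
proof -
  define C where "C = lyapunov (X0 0, X1 0, X2 0)"
  define S where "S s = growth (X0 s) (X1 s) (X2 s)" for s
  define m where "m s = wmass (X0 s) (X1 s) (X2 s)" for s
  define G where "G s = deviation (X0 s) (X1 s) (X2 s) - C * (m s)\<^sup>2" for s
  have G': "(G has_real_derivative
      deviation_rate (X0 s) (X1 s) (X2 s) - C * (2 * m s * ((l - S s) * m s))) (at s within {0..T})"
    if s: "s \<in> {0..T}" for s
    unfolding G_def m_def S_def
    by (rule derivative_eq_intros solves_on_has_derivative_deviation[OF sol s]
        solves_on_has_derivative_wmass[OF sol s] refl)+ simp
  have G'_le: "deviation_rate (X0 s) (X1 s) (X2 s) - C * (2 * m s * ((l - S s) * m s)) \<le> 2 * (l - S s) * G s"
    for s
  proof -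
    have "C * (2 * m s * ((l - S s) * m s)) = 2 * (l - S s) * (C * (m s)\<^sup>2)"
      by (simp add: power2_eq_square algebra_simps)
    moreover have "2 * (l - S s) * G s
        = 2 * (l - S s) * deviation (X0 s) (X1 s) (X2 s) - 2 * (l - S s) * (C * (m s)\<^sup>2)"
      by (simp add: G_def right_diff_distrib)
    moreover have "deviation_rate (X0 s) (X1 s) (X2 s) \<le> 2 * (l - S s) * deviation (X0 s) (X1 s) (X2 s)"
      using deviation_rate_le by (simp add: S_def)
    ultimately show ?thesis by linarith
  qed
  have "continuous_on {0..T} (\<lambda>s. 2 * (l - S s))"
    unfolding S_def by (intro continuous_intros continuous_on_growth_solves_on[OF sol])
  moreover have "G 0 \<le> 0"
    using m0 by (simp add: G_def C_def m_def lyapunov_def)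
  ultimately have "G T \<le> 0"
    using nonpos_preserved_by_linear_differential_inequality[OF T _ G' G'_le] by blast
  then show ?thesis by (simp add: G_def C_def m_def)
qed

definition zsum :: real where "zsum = z0 + z1 + z2"

definition equilibrium :: "real \<times> real \<times> real" where
  "equilibrium = (z0 / zsum, z1 / zsum, z2 / zsum)"

lemma zsum_pos: "zsum > 0"
  using z_pos by (simp add: zsum_def)

lemma equilibrium_pos:
  "equilibrium \<in> simplex3 \<and> fst equilibrium > 0 \<and> fst (snd equilibrium) > 0 \<and> snd (snd equilibrium) > 0"
  using z_pos zsum_pos
  by (simp add: equilibrium_def simplex3_def add_divide_distrib[symmetric] zsum_def)

lemma F_equilibrium: "F equilibrium = 0"
proof -
  have "growth z0 z1 z2 = l * zsum"
    unfolding growth_def zsum_def using right_eigen by algebra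
  then have "growth (z0 / zsum) (z1 / zsum) (z2 / zsum) = l"
    using zsum_pos by (simp add: growth_def add_divide_distrib[symmetric] algebra_simps)
  moreover have "z0 / zsum = z0 * (0 + 1 / zsum)" "z1 / zsum = z1 * (0 + 1 / zsum)"
    "z2 / zsum = z2 * (0 + 1 / zsum)"
    by simp_all
  note F_in_deviation_coordinates[OF this]
  ultimately show ?thesis by (simp add: F_def equilibrium_def zero_prod_def)
qed

lemma positive_equilibrium_unique:
  assumes "y \<in> simplex3" "fst y > 0" "fst (snd y) > 0" "snd (snd y) > 0" "F y = 0"
  shows "y = equilibrium"
proof -
  obtain y0 y1 y2 where y: "y = (y0, y1, y2)" by (cases y)
  have pos: "y0 > 0" "y1 > 0" "y2 > 0" and sum: "y0 + y1 + y2 = 1"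
    and F: "F0 y0 y1 y2 = 0" "F1 y0 y1 y2 = 0" "F2 y0 y1 y2 = 0"
    using assms by (auto simp: y simplex3_def F_def zero_prod_def)
  define m where "m = wmass y0 y1 y2"
  have "m > 0" using pos w_pos by (simp add: m_def wmass_def add_pos_pos)
  moreover have "(l - growth y0 y1 y2) * m = 0"
    using wmass_F[of y0 y1 y2] F by (simp add: m_def wmass_def)
  ultimately have S: "growth y0 y1 y2 = l" by simp
  obtain u0 u1 u2 where u: "y0 = z0 * (u0 + m)" "y1 = z1 * (u1 + m)" "y2 = z2 * (u2 + m)"
    using deviation_coordinates unfolding m_def by blast
  have "q00 * z0 * u0 + q01 * z1 * u1 + q02 * z2 * u2 = l * z0 * u0"
    "q10 * z0 * u0 + q11 * z1 * u1 + q12 * z2 * u2 = l * z1 * u1"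
    "q20 * z0 * u0 + q21 * z1 * u1 + q22 * z2 * u2 = l * z2 * u2"
    using F_in_deviation_coordinates[OF u] F S by simp_all
  then have "dirichlet u0 u1 u2 = 0"
    unfolding dirichlet_eq qform_def wnorm_def by (simp add: power2_eq_square algebra_simps)
  then have "u1 = u0" "u2 = u0" by (fact dirichlet_eq_0_imp_constant)+
  moreover have "w0 * z0 * u0 + w1 * z1 * u1 + w2 * z2 * u2 = 0"
    using deviation_in_deviation_coordinates(2)[OF u[unfolded m_def]] .
  ultimately have "u0 * (w0 * z0 + w1 * z1 + w2 * z2) = 0"
    by (simp add: algebra_simps)
  then have "u0 = 0" using normalized by simp
  with u \<open>u1 = u0\<close> \<open>u2 = u0\<close> have yz: "y0 = z0 * m" "y1 = z1 * m" "y2 = z2 * m" by simp_all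
  with sum have "m = 1 / zsum"
    using zsum_pos by (simp add: zsum_def field_simps)
  with yz show ?thesis by (simp add: y equilibrium_def)
qed

definition kappa :: real where "kappa = z0 / w0 + z1 / w1 + z2 / w2"

lemma kappa_pos: "kappa > 0"
  using z_pos w_pos by (simp add: kappa_def add_pos_pos)

lemma sq_component_deviation_le:
  "(x0 - z0 * wmass x0 x1 x2)\<^sup>2 \<le> kappa * deviation x0 x1 x2"
  "(x1 - z1 * wmass x0 x1 x2)\<^sup>2 \<le> kappa * deviation x0 x1 x2"
  "(x2 - z2 * wmass x0 x1 x2)\<^sup>2 \<le> kappa * deviation x0 x1 x2"
proof -
  have le_kappa_deviation: "e\<^sup>2 \<le> kappa * deviation x0 x1 x2"
    if "w / z * e\<^sup>2 \<le> deviation x0 x1 x2" "z / w \<le> kappa" "z > 0" "w > 0" for e z w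
  proof -
    have "e\<^sup>2 = z / w * (w / z * e\<^sup>2)" using that by (simp add: field_simps)
    also have "\<dots> \<le> z / w * deviation x0 x1 x2" using that by (intro mult_left_mono) auto
    also have "\<dots> \<le> kappa * deviation x0 x1 x2"
      using that deviation_nonneg by (intro mult_right_mono) auto
    finally show ?thesis .
  qed
  have terms: "0 \<le> w0 / z0 * (x0 - z0 * wmass x0 x1 x2)\<^sup>2" "0 \<le> w1 / z1 * (x1 - z1 * wmass x0 x1 x2)\<^sup>2"
    "0 \<le> w2 / z2 * (x2 - z2 * wmass x0 x1 x2)\<^sup>2"
    using z_pos w_pos by auto
  have ratios: "z0 / w0 \<le> kappa" "z1 / w1 \<le> kappa" "z2 / w2 \<le> kappa"
    using z_pos w_pos by (auto simp: kappa_def)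
  show "(x0 - z0 * wmass x0 x1 x2)\<^sup>2 \<le> kappa * deviation x0 x1 x2"
    by (rule le_kappa_deviation[OF _ ratios(1) z_pos(1) w_pos(1)])
      (use terms in \<open>simp add: deviation_def\<close>)
  show "(x1 - z1 * wmass x0 x1 x2)\<^sup>2 \<le> kappa * deviation x0 x1 x2"
    by (rule le_kappa_deviation[OF _ ratios(2) z_pos(2) w_pos(2)])
      (use terms in \<open>simp add: deviation_def\<close>)
  show "(x2 - z2 * wmass x0 x1 x2)\<^sup>2 \<le> kappa * deviation x0 x1 x2"
    by (rule le_kappa_deviation[OF _ ratios(3) z_pos(3) w_pos(3)])
      (use terms in \<open>simp add: deviation_def\<close>)
qed

lemma components_close_if_deviation_le:
  assumes dev: "deviation x0 x1 x2 \<le> C * (wmass x0 x1 x2)\<^sup>2"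
    and C: "0 \<le> C" "kappa * C \<le> \<rho>\<^sup>2" and \<rho>: "0 \<le> \<rho>"
  shows "\<bar>x0 - z0 * wmass x0 x1 x2\<bar> \<le> \<rho> * \<bar>wmass x0 x1 x2\<bar>"
    and "\<bar>x1 - z1 * wmass x0 x1 x2\<bar> \<le> \<rho> * \<bar>wmass x0 x1 x2\<bar>"
    and "\<bar>x2 - z2 * wmass x0 x1 x2\<bar> \<le> \<rho> * \<bar>wmass x0 x1 x2\<bar>"
proof -
  have sq: "kappa * deviation x0 x1 x2 \<le> (\<rho> * \<bar>wmass x0 x1 x2\<bar>)\<^sup>2"
  proof -
    have "kappa * deviation x0 x1 x2 \<le> kappa * (C * (wmass x0 x1 x2)\<^sup>2)"
      using dev kappa_pos by simp
    also have "\<dots> \<le> \<rho>\<^sup>2 * (wmass x0 x1 x2)\<^sup>2"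
      using C by (simp add: mult.assoc[symmetric] mult_right_mono)
    finally show ?thesis by (simp add: power_mult_distrib)
  qed
  show "\<bar>x0 - z0 * wmass x0 x1 x2\<bar> \<le> \<rho> * \<bar>wmass x0 x1 x2\<bar>"
    using order_trans[OF sq_component_deviation_le(1) sq] \<rho>
    by (simp add: abs_le_square_iff[symmetric] abs_mult)
  show "\<bar>x1 - z1 * wmass x0 x1 x2\<bar> \<le> \<rho> * \<bar>wmass x0 x1 x2\<bar>"
    using order_trans[OF sq_component_deviation_le(2) sq] \<rho>
    by (simp add: abs_le_square_iff[symmetric] abs_mult)
  show "\<bar>x2 - z2 * wmass x0 x1 x2\<bar> \<le> \<rho> * \<bar>wmass x0 x1 x2\<bar>"
    using order_trans[OF sq_component_deviation_le(3) sq] \<rho>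
    by (simp add: abs_le_square_iff[symmetric] abs_mult)
qed

text \<open>Summing the three bounds gives \<open>\<bar>1 - zsum * m\<bar> \<le> 3 \<rho> \<bar>m\<bar>\<close>, which pins \<open>m\<close> near \<open>1 / zsum\<close>.\<close>

lemma dist_equilibrium_le:
  assumes sum: "x0 + x1 + x2 = 1"
    and e: "\<bar>x0 - z0 * m\<bar> \<le> \<rho> * \<bar>m\<bar>" "\<bar>x1 - z1 * m\<bar> \<le> \<rho> * \<bar>m\<bar>" "\<bar>x2 - z2 * m\<bar> \<le> \<rho> * \<bar>m\<bar>"
    and \<rho>: "0 < \<rho>" "\<rho> \<le> zsum / 6"
  shows "dist (x0, x1, x2) equilibrium \<le> 24 * \<rho> / zsum"
proof -
  have es: "(x0 - z0 * m) + (x1 - z1 * m) + (x2 - z2 * m) = 1 - zsum * m"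
    using sum by (simp add: zsum_def algebra_simps)
  have \<rho>m: "\<rho> * \<bar>m\<bar> \<le> zsum / 6 * \<bar>m\<bar>" using \<rho> by (intro mult_right_mono) auto
  have "m > 0"
  proof (rule ccontr)
    assume "\<not> m > 0"
    then have "1 - zsum * m = 1 + zsum * \<bar>m\<bar>" by simp
    moreover have "zsum * \<bar>m\<bar> \<ge> 0" using zsum_pos by simp
    ultimately show False using es e \<rho>m by linarith
  qed
  then have am: "\<bar>m\<bar> = m" by simp
  have "zsum * m \<le> 2" using es e \<rho>m am by (simp add: algebra_simps)
  then have m_le: "m \<le> 2 / zsum" using zsum_pos by (simp add: field_simps)
  have diff: "\<bar>zsum * m - 1\<bar> \<le> 3 * \<rho> * m" using es e am by linarith
  have component: "\<bar>y - z / zsum\<bar> \<le> 8 * \<rho> / zsum"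
    if ey: "\<bar>y - z * m\<bar> \<le> \<rho> * m" and z: "0 < z" "z \<le> zsum" for y z
  proof -
    have "y - z / zsum = (y - z * m) + (z / zsum) * (zsum * m - 1)"
      using zsum_pos by (simp add: field_simps)
    then have "\<bar>y - z / zsum\<bar> \<le> \<bar>y - z * m\<bar> + \<bar>(z / zsum) * (zsum * m - 1)\<bar>"
      by (metis abs_triangle_ineq)
    also have "\<dots> = \<bar>y - z * m\<bar> + (z / zsum) * \<bar>zsum * m - 1\<bar>"
      using z zsum_pos by (simp add: abs_mult)
    also have "\<dots> \<le> \<rho> * m + 1 * (3 * \<rho> * m)"
      using ey diff z zsum_pos by (intro add_mono mult_mono) auto
    also have "\<dots> = 4 * (\<rho> * m)" by simp
    also have "\<dots> \<le> 4 * (\<rho> * (2 / zsum))" using m_le \<rho> by (intro mult_left_mono) auto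
    finally show ?thesis by simp
  qed
  have "z0 \<le> zsum" "z1 \<le> zsum" "z2 \<le> zsum" using z_pos by (auto simp: zsum_def)
  then have "\<bar>x0 - z0 / zsum\<bar> \<le> 8 * \<rho> / zsum" "\<bar>x1 - z1 / zsum\<bar> \<le> 8 * \<rho> / zsum"
    "\<bar>x2 - z2 / zsum\<bar> \<le> 8 * \<rho> / zsum"
    using component e am z_pos by simp_all
  then show ?thesis
    using dist_triple_le[of x0 x1 x2 "z0 / zsum" "z1 / zsum" "z2 / zsum"] by (simp add: equilibrium_def)
qed

lemma is_solution_sum_eq_1:
  assumes "is_solution F x" "x 0 \<in> simplex3" "0 \<le> t"
  shows "fst (x t) + fst (snd (x t)) + snd (snd (x t)) = 1"
  using solves_on_sum_eq_1[OF solves_on_if_is_solution[OF assms(1)] assms(3)] assms(2)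
  by (auto simp: simplex3_def)

lemma is_solution_deviation_le:
  assumes "is_solution F x" "x 0 \<in> simplex3" "0 \<le> t"
  shows "deviation (fst (x t)) (fst (snd (x t))) (snd (snd (x t)))
    \<le> lyapunov (x 0) * (wmass (fst (x t)) (fst (snd (x t))) (snd (snd (x t))))\<^sup>2"
proof -
  obtain a b c where x0: "x 0 = (a, b, c)" "a \<ge> 0" "b \<ge> 0" "c \<ge> 0" "a + b + c = 1"
    using assms(2) by (cases "x 0") (auto simp: simplex3_def)
  then have "wmass a b c > 0"
    using w_pos unfolding wmass_def
    by (smt (verit, best) mult_nonneg_nonneg mult_pos_pos)
  then show ?thesis
    using solves_on_deviation_le[OF solves_on_if_is_solution[OF assms(1)] assms(3)] x0 by simp
qed

lemma lyapunov_stable_equilibrium: "lyapunov_stable F simplex3 equilibrium"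
  unfolding lyapunov_stable_def
proof (intro allI impI)
  fix \<epsilon> :: real assume \<epsilon>: "\<epsilon> > 0"
  define \<rho> where "\<rho> = min (zsum / 6) (\<epsilon> * zsum / 48)"
  have \<rho>: "\<rho> > 0" "\<rho> \<le> zsum / 6" "24 * \<rho> / zsum < \<epsilon>"
    using zsum_pos \<epsilon> by (auto simp: \<rho>_def min_def field_simps)
  have m_eq: "wmass (fst equilibrium) (fst (snd equilibrium)) (snd (snd equilibrium)) = 1 / zsum"
    using normalized by (simp add: equilibrium_def wmass_def add_divide_distrib[symmetric])
  then have L0: "lyapunov equilibrium = 0"
    by (simp add: lyapunov_def deviation_def equilibrium_def)
  have "continuous (at equilibrium) lyapunov"
    unfolding lyapunov_def deviation_def
    by (intro continuous_intros) (use m_eq zsum_pos in \<open>simp_all add: wmass_def\<close>)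
  moreover have "\<rho>\<^sup>2 / kappa > 0" using \<rho> kappa_pos by simp
  ultimately obtain \<delta> where \<delta>: "\<delta> > 0"
    "\<And>y. dist y equilibrium < \<delta> \<Longrightarrow> dist (lyapunov y) (lyapunov equilibrium) < \<rho>\<^sup>2 / kappa"
    unfolding continuous_at_eps_delta by blast
  show "\<exists>\<delta>>0. \<forall>x. is_solution F x \<and> x 0 \<in> simplex3 \<and> dist (x 0) equilibrium < \<delta>
    \<longrightarrow> (\<forall>t\<ge>0. dist (x t) equilibrium < \<epsilon>)"
  proof (intro exI[of _ \<delta>] conjI allI impI \<delta>(1))
    fix x :: "real \<Rightarrow> real \<times> real \<times> real" and t :: real
    assume "is_solution F x \<and> x 0 \<in> simplex3 \<and> dist (x 0) equilibrium < \<delta>" and t: "0 \<le> t"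
    then have sol: "is_solution F x" and x0: "x 0 \<in> simplex3" "dist (x 0) equilibrium < \<delta>"
      by simp_all
    have C: "0 \<le> lyapunov (x 0)" by (simp add: lyapunov_def deviation_nonneg)
    moreover have "lyapunov (x 0) < \<rho>\<^sup>2 / kappa"
      using \<delta>(2)[OF x0(2)] C by (simp add: L0 dist_real_def)
    then have "kappa * lyapunov (x 0) \<le> \<rho>\<^sup>2"
      using kappa_pos by (simp add: field_simps)
    note close = components_close_if_deviation_le[OF is_solution_deviation_le[OF sol x0(1) t]
        C this less_imp_le[OF \<rho>(1)]]
    have "dist (x t) equilibrium \<le> 24 * \<rho> / zsum"
      using dist_equilibrium_le[OF is_solution_sum_eq_1[OF sol x0(1) t] close \<rho>(1,2)] by simp
    with \<rho>(3) show "dist (x t) equilibrium < \<epsilon>" by simp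
  qed
qed

lemma equilibrium_unique_stable:
  "\<exists>p. (p \<in> simplex3 \<and> fst p > 0 \<and> fst (snd p) > 0 \<and> snd (snd p) > 0 \<and> F p = 0)
    \<and> (\<forall>q. q \<in> simplex3 \<and> fst q > 0 \<and> fst (snd q) > 0 \<and> snd (snd q) > 0 \<and> F q = 0 \<longrightarrow> q = p)
    \<and> lyapunov_stable F simplex3 p"
  using equilibrium_pos F_equilibrium positive_equilibrium_unique lyapunov_stable_equilibrium
  by blast

end

lemma (in metzler3) unique_stable_positive_equilibrium:
  "\<exists>p. (p \<in> simplex3 \<and> fst p > 0 \<and> fst (snd p) > 0 \<and> snd (snd p) > 0 \<and> F p = 0)
    \<and> (\<forall>q. q \<in> simplex3 \<and> fst q > 0 \<and> fst (snd q) > 0 \<and> snd (snd q) > 0 \<and> F q = 0 \<longrightarrow> q = p)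
    \<and> lyapunov_stable F simplex3 p"
proof -
  obtain z0 z1 z2 l where z: "z0 > 0" "z1 > 0" "z2 > 0"
    "q00 * z0 + q01 * z1 + q02 * z2 = l * z0" "q10 * z0 + q11 * z1 + q12 * z2 = l * z1"
    "q20 * z0 + q21 * z1 + q22 * z2 = l * z2"
    using metzler3_positive_eigenvector[of q01 q02 q10 q12 q20 q21 q00 q11 q22] offdiag_pos by blast
  obtain y0 y1 y2 l' where y: "y0 > 0" "y1 > 0" "y2 > 0"
    "q00 * y0 + q10 * y1 + q20 * y2 = l' * y0" "q01 * y0 + q11 * y1 + q21 * y2 = l' * y1"
    "q02 * y0 + q12 * y1 + q22 * y2 = l' * y2"
    using metzler3_positive_eigenvector[of q10 q20 q01 q21 q02 q12 q00 q11 q22] offdiag_pos by blast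
  define N where "N = y0 * z0 + y1 * z1 + y2 * z2"
  have N: "N > 0" using y z by (simp add: N_def add_pos_pos)
  \<comment> \<open>both eigenvalues equal \<open>y\<^sup>T Q z / y\<^sup>T z\<close>\<close>
  have "l * N = l' * N" unfolding N_def using y z by algebra
  with N have "l' = l" by simp
  interpret metzler3_perron q00 q01 q02 q10 q11 q12 q20 q21 q22 z0 z1 z2 "y0 / N" "y1 / N" "y2 / N" l
  proof unfold_locales
    show "0 < y0 / N" "0 < y1 / N" "0 < y2 / N" using y N by simp_all
    show "y0 / N * q00 + y1 / N * q10 + y2 / N * q20 = l * (y0 / N)"
      "y0 / N * q01 + y1 / N * q11 + y2 / N * q21 = l * (y1 / N)"
      "y0 / N * q02 + y1 / N * q12 + y2 / N * q22 = l * (y2 / N)"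
      using y(4-6) \<open>l' = l\<close> N by (simp_all add: field_simps)
    show "y0 / N * z0 + y1 / N * z1 + y2 / N * z2 = 1"
      using N by (simp add: N_def add_divide_distrib[symmetric])
  qed (fact z)+
  show ?thesis by (rule equilibrium_unique_stable)
qed

theorem theorem3:
  fixes a1 a2 a3 b1 b2 b3 b4 g1 g2 g3 g4 :: real
  assumes "a1 > 0" "a2 > 0" "a3 > 0" "b1 > 0" "b2 > 0" "b3 > 0" "b4 > 0"
    "g1 > 0" "g2 > 0" "g3 > 0" "g4 > 0"
  shows "\<exists>p. (p \<in> simplex3 \<and> fst p > 0 \<and> fst (snd p) > 0 \<and> snd (snd p) > 0
               \<and> rev_rhs a1 a2 a3 b1 b2 b3 b4 g1 g2 g3 g4 p = 0)
          \<and> (\<forall>q. q \<in> simplex3 \<and> fst q > 0 \<and> fst (snd q) > 0 \<and> snd (snd q) > 0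
               \<and> rev_rhs a1 a2 a3 b1 b2 b3 b4 g1 g2 g3 g4 q = 0 \<longrightarrow> q = p)
          \<and> lyapunov_stable (rev_rhs a1 a2 a3 b1 b2 b3 b4 g1 g2 g3 g4) simplex3 p"
proof -
  interpret metzler3 a1 b2 g2 a2 "b1 - b2 - b3 - b4" g3 a3 b3 "g1 - g2 - g3 - g4"
    by unfold_locales (use assms in auto)
  have "rev_rhs a1 a2 a3 b1 b2 b3 b4 g1 g2 g3 g4 x = F x" for x
    unfolding rev_rhs_def F_def F0_def F1_def F2_def growth_def Let_def
    by (cases x) (simp add: algebra_simps)
  then have "rev_rhs a1 a2 a3 b1 b2 b3 b4 g1 g2 g3 g4 = F" ..
  then show ?thesis using unique_stable_positive_equilibrium by simp
qed

end
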